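(* Assume the standing setup and let $p$ be a prime divisor of $N$. Then the elements $$\alpha_{i,j,k}=q_{i,j}(\theta)\,\theta^k,\qquad 1\le i\le m,\ 1\le j\le\ell_i,\ 0\le k<\deg g_i,$$ where $q_{i,j}\in\mathbb Z[x]$ is the quotient of the division of $f$ by $g_i^j$, form a $\mathbb Z_{(p)}$-basis of $\mathbb Z_{(p)}[\theta]$. (In particular they are $\mathbb Z$-linearly independent and the polynomials $q_{i,j}x^k$ are linearly independent modulo $p$.)
   Context: Standing setup: $f\in\mathbb Z[x]$ monic irreducible of degree $n>1$, $\theta\in\overline{\mathbb Q}$ a root; $N>1$ an integer all of whose prime divisors are $>n$; $g_1,\dots,g_m\in\mathbb Z[x]$ monic of positive degree and $\ell_1,\dots,\ell_m$ positive integers with $f\equiv g_1^{\ell_1}\cdots g_m^{\ell_m}\pmod N$, such that for every prime $p\mid N$ the polynomials $\operatorname{red}_p(g_i)$ (reductions mod $p$) are squarefree and pairwise coprime in $\mathbb F_p[x]$. $\mathbb Z_{(p)}$ is the localization of $\mathbb Z$ at $p\mathbb Z$. *)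

theory Defs
  imports Complex_Main "Berlekamp_Zassenhaus.Poly_Mod"
begin

definition zloc :: "int \<Rightarrow> rat set" where
  "zloc p = {r. \<exists>a b. b \<noteq> 0 \<and> \<not> p dvd b \<and> r = of_int a / of_int b}"

definition zloc_adj :: "int \<Rightarrow> complex \<Rightarrow> complex set" where
  "zloc_adj p \<theta> = {poly (map_poly of_rat q) \<theta> | q. \<forall>i. coeff q i \<in> zloc p}"

text \<open>Quotient of the (Euclidean) division of a by b in Z[x] (b monic).\<close>
definition int_quot :: "int poly \<Rightarrow> int poly \<Rightarrow> int poly" where
  "int_quot a b = (THE q. \<exists>r. a = q * b + r \<and> (r = 0 \<or> degree r < degree b))"

end

theory Submission
  imports Defs "Berlekamp_Zassenhaus.Hensel_Lifting" "Berlekamp_Zassenhaus.Factorize_Rat_Poly"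
begin

text \<open>Modulo p we have f = prod_i g_i^l_i, hence q_ij = C_i g_i^(l_i - j) with the cofactor
  C_i = prod_(i' ~= i) g_i'^l_i'. A relation sum q_ij A_ij = 0 mod p with deg A_ij < deg g_i is
  therefore a partial fraction expansion of zero: the terms with index i' ~= i are divisible
  by g_i^l_i, and after cancelling C_i, which is coprime to g_i, what remains is a base-g_i
  expansion sum_j g_i^(l_i - j) A_ij that is divisible by g_i^l_i, so all its digits A_ij vanish.
  Thus the deg f polynomials q_ij x^k are linearly independent modulo p. Lifting, they are
  independent over the rationals, so their values at theta form a basis of Q(theta); and when
  an element of Z_(p)[theta] is written in this basis over a common denominator, every factor p
  of the denominator cancels, again by the independence modulo p.\<close>

hide_const (open) module.smult

section \<open>Division by monic integer polynomials\<close>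

lemma int_quot_unique:
  fixes b :: "'a :: idom poly"
  assumes b: "monic b" and eq: "q1 * b + r1 = q2 * b + r2"
    and r1: "r1 = 0 \<or> degree r1 < degree b" and r2: "r2 = 0 \<or> degree r2 < degree b"
  shows "q1 = q2"
proof (rule ccontr)
  assume ne: "q1 \<noteq> q2"
  have "(q1 - q2) * b = r2 - r1" using eq by (simp add: algebra_simps)
  moreover have "degree ((q1 - q2) * b) = degree (q1 - q2) + degree b"
    using ne b by (intro degree_mult_eq) auto
  moreover have "(q1 - q2) * b \<noteq> 0" using ne b by auto
  moreover have "degree (r2 - r1) \<le> max (degree r2) (degree r1)" by (rule degree_diff_le_max)
  ultimately show False using r1 r2 by auto
qed

lemma int_quot_eqI:
  assumes "monic b" and "f = q * b + r" and "r = 0 \<or> degree r < degree b"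
  shows "int_quot f b = q"
  unfolding int_quot_def
proof (rule the_equality)
  fix q' assume "\<exists>r'. f = q' * b + r' \<and> (r' = 0 \<or> degree r' < degree b)"
  then obtain r' where "f = q' * b + r'" and "r' = 0 \<or> degree r' < degree b" by blast
  with assms show "q' = q" by (intro int_quot_unique[of b q' r' q r]) simp_all
qed (use assms in blast)

lemma int_quot_exists:
  assumes b: "monic b"
  obtains r where "f = int_quot f b * b + r" and "r = 0 \<or> degree r < degree b"
proof -
  obtain q r where "pdivmod_monic f b = (q, r)" by force
  from pdivmod_monic[OF b this] have "f = q * b + r" and "r = 0 \<or> degree r < degree b"
    by (auto simp: ac_simps)
  with int_quot_eqI[OF b this] that show ?thesis by blast
qed

lemma degree_int_quot:
  assumes b: "monic b" and "f \<noteq> 0" and "degree b \<le> degree f"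
  shows "degree (int_quot f b) + degree b = degree f"
proof -
  define q where "q = int_quot f b"
  obtain r where f: "f = q * b + r" and r: "r = 0 \<or> degree r < degree b"
    using int_quot_exists[OF b] unfolding q_def by blast
  with assms r have "q \<noteq> 0" by auto
  then have dq: "degree (q * b) = degree q + degree b"
    using b by (intro degree_mult_eq) auto
  have "degree (q * b + r) = degree (q * b)"
  proof (cases "r = 0")
    case False
    with r dq show ?thesis by (intro degree_add_eq_left) auto
  qed simp
  with f dq show ?thesis unfolding q_def[symmetric] by simp
qed

lemma degree_int_quot_mult_monom:
  assumes "monic b" and "f \<noteq> 0" and "degree b \<le> degree f" and "k < degree b"
  shows "degree (int_quot f b * monom 1 k) < degree f"
proof -
  have "degree (int_quot f b * monom 1 k) \<le> degree (int_quot f b) + k"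
    by (rule order.trans[OF degree_mult_le]) (simp add: degree_monom_le)
  with degree_int_quot[OF assms(1-3)] assms(4) show ?thesis by linarith
qed

section \<open>Polynomial arithmetic modulo an integer\<close>

context poly_mod_2
begin

lemma Mp_eq_if_Mp_diff_0:
  assumes "Mp (a - b) = 0"
  shows "Mp a = Mp b"
proof -
  have "Mp a = Mp (Mp (a - b) + b)" by simp
  also have "\<dots> = Mp b" using assms by simp
  finally show ?thesis .
qed

lemma monic_dvdm_small_imp_Mp_0:
  assumes "monic g" and "g dvdm r" and "r = 0 \<or> degree r < degree g"
  shows "Mp r = 0"
proof (rule ccontr)
  assume nz: "Mp r \<noteq> 0"
  then have "r \<noteq> 0" by auto
  moreover have "degree g \<le> degree r" using dvdm_imp_degree_le[OF assms(2,1) nz m1] .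
  ultimately show False using assms(3) by simp
qed

lemma monic_mult_Mp_0:
  assumes g: "monic g" and eq: "Mp (g * a) = 0"
  shows "Mp a = 0"
proof (rule ccontr)
  assume nz: "Mp a \<noteq> 0"
  have lc: "lead_coeff (Mp a) mod m \<noteq> 0"
    by (metis Mp_Mp Mp_coeff leading_coeff_neq_0 M_def nz)
  have "coeff (g * Mp a) (degree g + degree (Mp a)) = lead_coeff (Mp a)"
    using g by (simp add: coeff_mult_degree_sum)
  then have "coeff (Mp (g * Mp a)) (degree g + degree (Mp a)) \<noteq> 0"
    using lc unfolding Mp_coeff[of "g * Mp a"] by (simp add: M_def)
  with eq show False by simp
qed

lemma monic_mult_cancel_m:
  assumes g: "monic g" and eq: "Mp (g * a) = Mp (g * b)"
  shows "Mp a = Mp b"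
proof -
  have "Mp (g * (a - b)) = Mp (Mp (g * a) - Mp (g * b))" by (simp add: algebra_simps)
  with eq have "Mp (g * (a - b)) = 0" by simp
  then show ?thesis by (rule Mp_eq_if_Mp_diff_0[OF monic_mult_Mp_0[OF g]])
qed

lemma monic_quotient_eq_m:
  assumes b: "monic b" and f: "f = q * b + r" and r: "r = 0 \<or> degree r < degree b"
    and fh: "Mp f = Mp (h * b)"
  shows "Mp q = Mp h"
proof -
  have "Mp (b * (q - h)) = Mp (Mp f - (h * b + r))" unfolding f by (simp add: algebra_simps)
  also have "\<dots> = Mp (- r)" unfolding fh by (simp add: algebra_simps)
  finally have b_qh: "Mp (b * (q - h)) = Mp (- r)" .
  then have "b dvdm (- r)" unfolding dvdm_def by (intro exI[of _ "q - h"]) (rule sym)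
  with b r have "Mp (- r) = 0" by (intro monic_dvdm_small_imp_Mp_0) auto
  with b_qh have "Mp (b * (q - h)) = 0" by (rule trans)
  then have "Mp (q - h) = 0" by (rule monic_mult_Mp_0[OF b])
  then show ?thesis by (rule Mp_eq_if_Mp_diff_0)
qed

lemma int_quot_power_eq_m:
  assumes b: "monic b" and f: "Mp f = Mp (C * b ^ l)" and j: "j \<le> l"
  shows "Mp (int_quot f (b ^ j)) = Mp (C * b ^ (l - j))"
proof -
  obtain r where "f = int_quot f (b ^ j) * b ^ j + r" and "r = 0 \<or> degree r < degree (b ^ j)"
    using int_quot_exists[OF monic_power[OF b]] by blast
  moreover have "Mp f = Mp (C * b ^ (l - j) * b ^ j)"
    using f j by (simp add: mult.assoc flip: power_add)
  ultimately show ?thesis by (rule monic_quotient_eq_m[OF monic_power[OF b]])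
qed

lemma monic_power_dvdm_cancel:
  assumes g: "monic g" and C: "\<And>S. g dvdm (C * S) \<Longrightarrow> g dvdm S"
  shows "(g ^ l) dvdm (C * S) \<Longrightarrow> (g ^ l) dvdm S"
proof (induction l arbitrary: S)
  case 0 show ?case unfolding dvdm_def by (intro exI[of _ S]) simp
next
  case (Suc l)
  then obtain h where h: "Mp (C * S) = Mp (g * (g ^ l * h))"
    unfolding dvdm_def by (auto simp: ac_simps)
  then have "g dvdm (C * S)" unfolding dvdm_def by blast
  then have "g dvdm S" by (rule C)
  then obtain S' where S': "Mp S = Mp (g * S')" unfolding dvdm_def by auto
  have "Mp (g * (C * S')) = Mp (C * (g * S'))" by (simp add: ac_simps)
  also have "\<dots> = Mp (C * S)" by (metis S' mult_Mp(2))
  finally have "Mp (g * (C * S')) = Mp (C * S)" .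
  with h have "Mp (g * (C * S')) = Mp (g * (g ^ l * h))" by simp
  then have "(g ^ l) dvdm (C * S')" unfolding dvdm_def by (blast dest: monic_mult_cancel_m[OF g])
  then obtain h' where h': "Mp S' = Mp (g ^ l * h')" using Suc.IH unfolding dvdm_def by blast
  have "Mp S = Mp (g * Mp S')" using S' by simp
  also have "\<dots> = Mp (g ^ Suc l * h')" unfolding h' by (simp add: ac_simps)
  finally have "Mp S = Mp (g ^ Suc l * h')" .
  then show ?case unfolding dvdm_def by blast
qed

lemma base_power_digits_Mp_0:
  assumes g: "monic g" and small: "\<forall>j\<in>{1..l}. A j = 0 \<or> degree (A j) < degree g"
    and dvd: "(g ^ l) dvdm (\<Sum>j=1..l. g ^ (l - j) * A j)"
  shows "\<forall>j\<in>{1..l}. Mp (A j) = 0"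
  using small dvd
proof (induction l)
  case (Suc l)
  define S where "S = (\<Sum>j=1..l. g ^ (l - j) * A j)"
  have "(\<Sum>j=1..Suc l. g ^ (Suc l - j) * A j) = (\<Sum>j=1..l. g * (g ^ (l - j) * A j)) + A (Suc l)"
    by (simp, intro sum.cong) (auto simp: Suc_diff_le)
  then have split: "(\<Sum>j=1..Suc l. g ^ (Suc l - j) * A j) = g * S + A (Suc l)"
    unfolding S_def by (simp add: sum_distrib_left)
  from Suc.prems(2) obtain h where h: "Mp (g * S + A (Suc l)) = Mp (g * (g ^ l * h))"
    unfolding dvdm_def split by (auto simp: ac_simps)
  then have "g dvdm (g * S + A (Suc l))" unfolding dvdm_def by blast
  moreover have "g dvdm (- (g * S))" unfolding dvdm_def by (intro exI[of _ "- S"]) simp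
  ultimately have "g dvdm (g * S + A (Suc l) + - (g * S))" by (rule dvdm_add)
  then have last: "Mp (A (Suc l)) = 0"
    using Suc.prems(1) by (intro monic_dvdm_small_imp_Mp_0[OF g]) auto
  have "Mp (g * S) = Mp (g * S + Mp (A (Suc l)))" unfolding last by simp
  also have "\<dots> = Mp (g * (g ^ l * h))" using h by (simp only: plus_Mp(2))
  finally have "Mp (g * S) = Mp (g * (g ^ l * h))" .
  then have "(g ^ l) dvdm S" unfolding dvdm_def by (blast dest: monic_mult_cancel_m[OF g])
  with Suc.IH Suc.prems(1) have "\<forall>j\<in>{1..l}. Mp (A j) = 0" unfolding S_def by auto
  with last show ?case by (auto simp: le_Suc_eq)
qed simp

lemma Mp_sum_cong: "(\<And>x. x \<in> A \<Longrightarrow> Mp (f x) = Mp (h x)) \<Longrightarrow> Mp (sum f A) = Mp (sum h A)"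
proof (induction A rule: infinite_finite_induct)
  case (insert x F)
  have "Mp (sum f (insert x F)) = Mp (Mp (f x) + Mp (sum f F))" using insert.hyps by simp
  also have "\<dots> = Mp (Mp (h x) + Mp (sum h F))" using insert by auto
  also have "\<dots> = Mp (sum h (insert x F))" using insert.hyps by simp
  finally show ?case .
qed auto

lemma Mp_eq_if_Mp_multiple_modulus_eq:
  assumes "m dvd N" and "N > 0" and "poly_mod.Mp N a = poly_mod.Mp N b"
  shows "Mp a = Mp b"
proof -
  obtain k where N: "N = m * k" using assms(1) by (elim dvdE)
  with assms(2) have "k > 0" using m1 by (simp add: zero_less_mult_iff)
  with N assms(3) show ?thesis by (metis Mp_product_modulus)
qed

lemma degree_eq_if_Mp_eq_monic_prod:
  fixes g :: "nat \<Rightarrow> int poly"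
  assumes "monic f" and g: "\<And>i. i < n \<Longrightarrow> monic (g i)" and "Mp f = Mp (\<Prod>i<n. g i ^ l i)"
  shows "degree f = (\<Sum>i<n. l i * degree (g i))"
proof -
  have "monic (\<Prod>i<n. g i ^ l i)" using g by (intro monic_prod monic_power) auto
  with assms have "degree f = degree (\<Prod>i<n. g i ^ l i)" by (metis monic_degree_m)
  also have "\<dots> = (\<Sum>i<n. degree (g i ^ l i))"
    by (rule degree_prod_eq_sum_degree) (use g in fastforce)
  also have "\<dots> = (\<Sum>i<n. l i * degree (g i))"
    by (intro sum.cong refl Polynomial.degree_power_eq) (use g in fastforce)
  finally show ?thesis .
qed

end

section \<open>Coprimality modulo a prime\<close>

context poly_mod_prime
begin

lemma Mp_smult_monic:
  assumes "Mp d \<noteq> 0"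
  obtains c where "monic (Mp (smult c d))" and "degree (Mp (smult c d)) = degree (Mp d)"
proof -
  define n where "n = degree (Mp d)"
  define lc where "lc = lead_coeff (Mp d)"
  have lc: "lc = M (coeff d n)" unfolding lc_def n_def by (simp add: Mp_coeff)
  have "lc \<noteq> 0" using assms unfolding lc_def by simp
  moreover have "0 \<le> lc" "lc < p" unfolding lc M_def using m1 by simp_all
  ultimately have "\<not> p dvd lc" using zdvd_not_zless[of lc p] by simp
  then have "coprime p lc" using prime by (auto intro: prime_imp_coprime)
  then have "coprime lc p" by (simp add: ac_simps)
  define c where "c = inverse_mod lc p"
  have "coeff (Mp (smult c d)) n = M (c * M (coeff d n))" unfolding Mp_coeff coeff_smult by simp
  also have "\<dots> = 1" unfolding lc[symmetric] c_def by (rule inverse_mod_coprime[OF prime \<open>coprime lc p\<close>])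
  finally have lead: "coeff (Mp (smult c d)) n = 1" .
  have "Mp (smult c d) = Mp (smult c (Mp d))" by simp
  then have "degree (Mp (smult c d)) \<le> n"
    unfolding n_def using degree_m_le[of "smult c (Mp d)"] degree_smult_le[of c "Mp d"] by simp
  moreover have "n \<le> degree (Mp (smult c d))" using lead by (intro le_degree) simp
  ultimately have "degree (Mp (smult c d)) = n" by simp
  with lead show ?thesis unfolding n_def by (intro that) simp_all
qed

text \<open>The remainder of a division by a monic combination of least degree is again a
  combination, of smaller degree.\<close>

lemma least_monic_combination_dvdm:
  assumes mon: "monic d" and d: "d = Mp (g * u + h * v)"
    and least: "\<And>u' v'. monic (Mp (g * u' + h * v')) \<Longrightarrow> degree d \<le> degree (Mp (g * u' + h * v'))"
  shows "d dvdm (g * a + h * b)"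
proof -
  obtain q r where "pdivmod_monic (Mp (g * a + h * b)) d = (q, r)" by (rule prod.exhaust)
  from pdivmod_monic[OF mon this] have qr: "Mp (g * a + h * b) = d * q + r"
    and r: "r = 0 \<or> degree r < degree d" by auto
  from qr have "r = Mp (g * a + h * b) - d * q" by simp
  then have "Mp r = Mp (Mp (g * a + h * b) - Mp (g * u + h * v) * q)" using d by simp
  also have "\<dots> = Mp (Mp (g * a + h * b) - Mp (Mp (g * u + h * v) * q))" by (simp only: minus_Mp(2))
  also have "\<dots> = Mp ((g * a + h * b) - (g * u + h * v) * q)" by (simp only: mult_Mp(1) minus_Mp)
  also have "\<dots> = Mp (g * (a - u * q) + h * (b - v * q))" by (simp add: algebra_simps)
  finally have r_comb: "Mp r = Mp (g * (a - u * q) + h * (b - v * q))" .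
  have "Mp r = 0"
  proof (rule ccontr)
    assume nz: "Mp r \<noteq> 0"
    then obtain c where mon_c: "monic (Mp (smult c r))" and deg_c: "degree (Mp (smult c r)) = degree (Mp r)"
      by (rule Mp_smult_monic)
    have "Mp (smult c r) = Mp (smult c (Mp r))" by simp
    also have "\<dots> = Mp (g * smult c (a - u * q) + h * smult c (b - v * q))"
      unfolding r_comb by (simp add: smult_add_right)
    finally have "degree d \<le> degree (Mp (smult c r))" using least mon_c by metis
    also have "\<dots> \<le> degree r" unfolding deg_c by (rule degree_m_le)
    finally show False using r nz by auto
  qed
  have "Mp (g * a + h * b) = Mp (d * q + r)" by (simp only: qr[symmetric] Mp_Mp)
  also have "\<dots> = Mp (d * q + Mp r)" by (simp only: plus_Mp)
  also have "\<dots> = Mp (d * q)" using \<open>Mp r = 0\<close> by simp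
  finally show ?thesis unfolding dvdm_def by blast
qed

lemma coprime_m_bezout:
  assumes cop: "coprime_m g h"
  shows "\<exists>u v. Mp (g * u + h * v) = 1"
proof -
  define D where "D = {Mp (g * u + h * v) | u v. monic (Mp (g * u + h * v))}"
  have D_ne: "\<exists>d. d \<in> D" if nz: "Mp (g * u + h * v) \<noteq> 0" for u v
  proof -
    obtain c where "monic (Mp (smult c (g * u + h * v)))" using nz by (rule Mp_smult_monic)
    then have "monic (Mp (g * smult c u + h * smult c v))" by (simp add: smult_add_right)
    then show ?thesis unfolding D_def by blast
  qed
  have "Mp g \<noteq> 0 \<or> Mp h \<noteq> 0"
  proof (rule ccontr)
    assume "\<not> ?thesis"
    then have "monom 1 1 dvdm g" and "monom 1 1 dvdm h" unfolding dvdm_def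
      by (auto intro!: exI[of _ 0])
    with cop have "monom 1 1 dvdm 1" unfolding coprime_m_def by blast
    from dvdm_imp_degree_le[OF this _ _ m1] show False by (simp add: degree_monom_eq)
  qed
  then obtain d0 where "d0 \<in> D" using D_ne[of 1 0] D_ne[of 0 1] by auto
  then obtain d where "d \<in> D" and least: "\<And>d'. d' \<in> D \<Longrightarrow> degree d \<le> degree d'"
    using ex_has_least_nat[of "\<lambda>d. d \<in> D" d0 degree] by blast
  then obtain u v where d: "d = Mp (g * u + h * v)" and mon: "monic d" unfolding D_def by blast
  have "d dvdm (g * a + h * b)" for a b
    using mon d by (rule least_monic_combination_dvdm) (use least in \<open>auto simp: D_def\<close>)
  from this[of 1 0] this[of 0 1] cop have "d dvdm 1" unfolding coprime_m_def by simp
  from dvdm_imp_degree_le[OF this mon _ m1] have "degree d = 0" by simp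
  then have "d = 1" using monic_degree_0[OF mon] by simp
  with d show ?thesis by blast
qed

lemma coprime_m_dvdm_mult_cancel:
  assumes cop: "coprime_m g h" and dvd: "g dvdm (h * S)"
  shows "g dvdm S"
proof -
  obtain u v where uv: "Mp (g * u + h * v) = 1" using coprime_m_bezout[OF cop] by blast
  obtain T where T: "Mp (h * S) = Mp (g * T)" using dvd unfolding dvdm_def by auto
  have "Mp S = Mp ((g * u + h * v) * S)" by (metis Mp_1 mult_Mp(1) uv mult_1)
  also have "\<dots> = Mp (g * (u * S) + v * (h * S))" by (simp add: algebra_simps)
  also have "\<dots> = Mp (g * (u * S) + v * Mp (h * S))" by (metis plus_Mp(2) mult_Mp(2))
  also have "\<dots> = Mp (g * (u * S) + v * (g * T))" unfolding T by (metis plus_Mp(2) mult_Mp(2))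
  also have "\<dots> = Mp (g * (u * S + v * T))" by (simp add: algebra_simps)
  finally show ?thesis unfolding dvdm_def by blast
qed

lemma coprime_m_dvdm_power_cancel:
  assumes "coprime_m g h"
  shows "g dvdm (h ^ k * S) \<Longrightarrow> g dvdm S"
proof (induction k arbitrary: S)
  case (Suc k)
  then have "g dvdm (h * (h ^ k * S))" by (simp add: ac_simps)
  then show ?case by (rule Suc.IH[OF coprime_m_dvdm_mult_cancel[OF assms]])
qed simp

lemma coprime_m_dvdm_prod_cancel:
  assumes "finite A" and "\<And>i. i \<in> A \<Longrightarrow> coprime_m g (c i)"
  shows "g dvdm ((\<Prod>i\<in>A. c i ^ e i) * S) \<Longrightarrow> g dvdm S"
  using assms
proof (induction A arbitrary: S rule: finite_induct)
  case (insert x F)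
  then have "g dvdm (c x ^ e x * ((\<Prod>i\<in>F. c i ^ e i) * S))" by (simp add: ac_simps)
  with insert.prems(2) have "g dvdm ((\<Prod>i\<in>F. c i ^ e i) * S)"
    using coprime_m_dvdm_power_cancel[of g "c x" "e x"] by blast
  then show ?case using insert.IH insert.prems(2) by simp
qed simp

text \<open>Uniqueness of partial fraction expansions modulo \<open>p\<close>: the terms not belonging to
  \<open>g i\<close> are divisible by \<open>g i ^ l i\<close>, and the cofactor of \<open>g i ^ l i\<close> is coprime to \<open>g i\<close>.\<close>

lemma partial_fraction_digits_Mp_0:
  fixes g :: "nat \<Rightarrow> int poly"
  assumes monic: "\<And>i. i < m \<Longrightarrow> monic (g i)"
    and coprime: "\<And>i i'. i < m \<Longrightarrow> i' < m \<Longrightarrow> i \<noteq> i' \<Longrightarrow> coprime_m (g i) (g i')"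
    and small: "\<And>i j. i < m \<Longrightarrow> j \<in> {1..l i} \<Longrightarrow> A i j = 0 \<or> degree (A i j) < degree (g i)"
    and sum0: "Mp (\<Sum>i<m. \<Sum>j=1..l i. (\<Prod>i'\<in>{..<m} - {i}. g i' ^ l i') * g i ^ (l i - j) * A i j) = 0"
    and i: "i < m" and j: "j \<in> {1..l i}"
  shows "Mp (A i j) = 0"
proof -
  define T where "T i j = (\<Prod>i'\<in>{..<m} - {i}. g i' ^ l i') * g i ^ (l i - j) * A i j" for i j
  define C where "C = (\<Prod>i'\<in>{..<m} - {i}. g i' ^ l i')"
  define S where "S = (\<Sum>j=1..l i. g i ^ (l i - j) * A i j)"
  have "g i ^ l i dvd T i' j'" if "i' \<in> {..<m} - {i}" for i' j'
    using that i unfolding T_def by (intro dvd_mult2 dvd_prodI[of "{..<m} - {i'}"]) auto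
  then have "g i ^ l i dvd (\<Sum>i'\<in>{..<m} - {i}. \<Sum>j=1..l i'. T i' j)"
    by (intro dvd_sum) auto
  then obtain B where B: "(\<Sum>i'\<in>{..<m} - {i}. \<Sum>j=1..l i'. T i' j) = g i ^ l i * B"
    by (elim dvdE)
  have "(\<Sum>i<m. \<Sum>j=1..l i. T i j)
      = (\<Sum>j=1..l i. T i j) + (\<Sum>i'\<in>{..<m} - {i}. \<Sum>j=1..l i'. T i' j)"
    using i by (simp add: sum.remove)
  also have "(\<Sum>j=1..l i. T i j) = C * S"
    unfolding T_def C_def S_def sum_distrib_left by (simp add: mult.assoc)
  finally have "(\<Sum>i<m. \<Sum>j=1..l i. T i j) = C * S + g i ^ l i * B" unfolding B .
  moreover have "Mp (\<Sum>i<m. \<Sum>j=1..l i. T i j) = 0" using sum0 by (simp add: T_def)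
  ultimately have "Mp (C * S + g i ^ l i * B) = 0" by simp
  then have "Mp (g i ^ l i * (- B)) = Mp (Mp (C * S + g i ^ l i * B) + g i ^ l i * (- B))" by simp
  also have "\<dots> = Mp (C * S)" by (simp only: plus_Mp) simp
  finally have "Mp (C * S) = Mp (g i ^ l i * (- B))" ..
  then have "(g i ^ l i) dvdm (C * S)" unfolding dvdm_def by blast
  moreover have "g i dvdm U" if "g i dvdm (C * U)" for U
    by (rule coprime_m_dvdm_prod_cancel[of "{..<m} - {i}", OF _ _ that[unfolded C_def]])
      (use i in \<open>auto intro: coprime\<close>)
  ultimately have "(g i ^ l i) dvdm S" using monic_power_dvdm_cancel[OF monic[OF i]] by blast
  with base_power_digits_Mp_0[OF monic[OF i]] small[OF i] j show ?thesis unfolding S_def by blast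
qed

end

section \<open>Independence of the polynomials \<open>q\<^sub>i\<^sub>j x\<^sup>k\<close> modulo \<open>p\<close>\<close>

definition quot_monom :: "int poly \<Rightarrow> (nat \<Rightarrow> int poly) \<Rightarrow> nat \<times> nat \<times> nat \<Rightarrow> int poly" where
  "quot_monom f g = (\<lambda>(i, j, k). int_quot f (g i ^ j) * monom 1 k)"

lemma sum_Sigma_Sigma:
  assumes "finite A" "\<And>i. i \<in> A \<Longrightarrow> finite (B i)" "\<And>i j. i \<in> A \<Longrightarrow> j \<in> B i \<Longrightarrow> finite (C i j)"
  shows "(\<Sum>x\<in>Sigma A (\<lambda>i. Sigma (B i) (C i)). h x) = (\<Sum>i\<in>A. \<Sum>j\<in>B i. \<Sum>k\<in>C i j. h (i, j, k))"
proof -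
  have "(\<Sum>i\<in>A. \<Sum>j\<in>B i. \<Sum>k\<in>C i j. h (i, j, k)) = (\<Sum>i\<in>A. \<Sum>jk\<in>Sigma (B i) (C i). h (i, jk))"
    using assms by (intro sum.cong refl, subst sum.Sigma) (auto simp: split_def)
  also have "\<dots> = (\<Sum>x\<in>Sigma A (\<lambda>i. Sigma (B i) (C i)). h x)"
    using assms by (subst sum.Sigma) (auto simp: split_def)
  finally show ?thesis ..
qed

lemma card_triple_index_set:
  fixes m :: nat
  shows "card {(i, j, k). i < m \<and> 1 \<le> j \<and> j \<le> l i \<and> k < d i} = (\<Sum>i<m. l i * d i)"
proof -
  have "{(i, j, k). i < m \<and> 1 \<le> j \<and> j \<le> l i \<and> k < d i} = Sigma {..<m} (\<lambda>i. {1..l i} \<times> {..<d i})"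
    by auto
  then show ?thesis by (simp only:) (subst card_SigmaI, auto simp: card_cartesian_product)
qed

lemma degree_quot_monom:
  fixes g :: "nat \<Rightarrow> int poly"
  assumes "monic f" and g: "\<And>i. i < m \<Longrightarrow> monic (g i)"
    and deg_f: "degree f = (\<Sum>i<m. l i * degree (g i))"
    and x: "x \<in> {(i, j, k). i < m \<and> 1 \<le> j \<and> j \<le> l i \<and> k < degree (g i)}"
  shows "degree (quot_monom f g x) < degree f"
proof -
  obtain i j k where x: "x = (i, j, k)" "i < m" "1 \<le> j" "j \<le> l i" "k < degree (g i)"
    using x by auto
  have deg_power: "degree (g i ^ j) = j * degree (g i)"
    using g[OF x(2)] by (intro Polynomial.degree_power_eq) auto
  have "j * degree (g i) \<le> l i * degree (g i)" using x by simp
  also have "\<dots> \<le> degree f" unfolding deg_f using x(2) by (intro member_le_sum) auto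
  finally have "degree (g i ^ j) \<le> degree f" unfolding deg_power .
  moreover have "k < degree (g i ^ j)" unfolding deg_power using x by (simp add: less_le_trans)
  ultimately show ?thesis
    unfolding x(1) quot_monom_def prod.case using assms(1) g[OF x(2)]
    by (intro degree_int_quot_mult_monom monic_power) auto
qed

lemma sum_quot_monom_regroup:
  assumes I: "I = {(i, j, k). i < m \<and> 1 \<le> j \<and> j \<le> l i \<and> k < degree (g i)}"
  shows "(\<Sum>x\<in>I. smult (c x) (quot_monom f g x))
    = (\<Sum>i<m. \<Sum>j=1..l i. int_quot f (g i ^ j) * (\<Sum>k<degree (g i). monom (c (i, j, k)) k))"
proof -
  have "I = Sigma {..<m} (\<lambda>i. Sigma {1..l i} (\<lambda>j. {..<degree (g i)}))"
    unfolding I by auto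
  then have "(\<Sum>x\<in>I. smult (c x) (quot_monom f g x))
      = (\<Sum>i<m. \<Sum>j=1..l i. \<Sum>k<degree (g i). smult (c (i, j, k)) (quot_monom f g (i, j, k)))"
    by (simp only:) (rule sum_Sigma_Sigma, auto)
  also have "\<dots> = (\<Sum>i<m. \<Sum>j=1..l i. int_quot f (g i ^ j) * (\<Sum>k<degree (g i). monom (c (i, j, k)) k))"
    unfolding quot_monom_def sum_distrib_left by (simp add: smult_monom flip: mult_smult_right)
  finally show ?thesis .
qed

lemma (in poly_mod_2) int_quot_cofactor_eq_m:
  fixes g :: "nat \<Rightarrow> int poly"
  assumes monic: "\<And>i. i < n \<Longrightarrow> monic (g i)" and fact: "Mp f = Mp (\<Prod>i<n. g i ^ l i)"
    and i: "i < n" and j: "j \<le> l i"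
  shows "Mp (int_quot f (g i ^ j)) = Mp ((\<Prod>i'\<in>{..<n} - {i}. g i' ^ l i') * g i ^ (l i - j))"
proof -
  have "Mp f = Mp ((\<Prod>i'\<in>{..<n} - {i}. g i' ^ l i') * g i ^ l i)"
    using fact i by (simp add: prod.remove mult.commute)
  with i j show ?thesis by (intro int_quot_power_eq_m[OF monic])
qed

lemma (in poly_mod_prime) quot_monom_combination_Mp_0_imp_dvd:
  fixes g :: "nat \<Rightarrow> int poly"
  assumes monic: "\<And>i. i < m \<Longrightarrow> monic (g i)"
    and coprime: "\<And>i i'. i < m \<Longrightarrow> i' < m \<Longrightarrow> i \<noteq> i' \<Longrightarrow> coprime_m (g i) (g i')"
    and fact: "Mp f = Mp (\<Prod>i<m. g i ^ l i)"
    and I: "I = {(i, j, k). i < m \<and> 1 \<le> j \<and> j \<le> l i \<and> k < degree (g i)}"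
    and sum0: "Mp (\<Sum>x\<in>I. smult (c x) (quot_monom f g x)) = 0"
    and x: "x \<in> I"
  shows "p dvd c x"
proof -
  define A where "A i j = (\<Sum>k<degree (g i). monom (c (i, j, k)) k)" for i j
  have coeff_A: "coeff (A i j) k = (if k < degree (g i) then c (i, j, k) else 0)" for i j k
    unfolding A_def coeff_sum by (simp add: coeff_monom)
  have "Mp (\<Sum>i<m. \<Sum>j=1..l i. int_quot f (g i ^ j) * A i j)
      = Mp (\<Sum>i<m. \<Sum>j=1..l i. (\<Prod>i'\<in>{..<m} - {i}. g i' ^ l i') * g i ^ (l i - j) * A i j)"
  proof (intro Mp_sum_cong)
    fix i j assume "i \<in> {..<m}" and "j \<in> {1..l i}"
    with monic fact have "Mp (int_quot f (g i ^ j))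
        = Mp ((\<Prod>i'\<in>{..<m} - {i}. g i' ^ l i') * g i ^ (l i - j))"
      by (intro int_quot_cofactor_eq_m) auto
    then show "Mp (int_quot f (g i ^ j) * A i j)
        = Mp ((\<Prod>i'\<in>{..<m} - {i}. g i' ^ l i') * g i ^ (l i - j) * A i j)"
      by (metis mult_Mp(1))
  qed
  with sum0 have sum0': "Mp (\<Sum>i<m. \<Sum>j=1..l i. (\<Prod>i'\<in>{..<m} - {i}. g i' ^ l i') * g i ^ (l i - j) * A i j) = 0"
    unfolding sum_quot_monom_regroup[OF I] A_def by simp
  obtain i j k where xijk: "x = (i, j, k)" "i < m" "j \<in> {1..l i}" "k < degree (g i)"
    using x unfolding I by auto
  have "A i j = 0 \<or> degree (A i j) < degree (g i)" for i j
  proof (cases "degree (g i) = 0")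
    case False
    have "degree (A i j) \<le> degree (g i) - 1" by (rule degree_le) (auto simp: coeff_A)
    with False show ?thesis by linarith
  qed (simp add: A_def)
  with partial_fraction_digits_Mp_0[OF monic coprime _ sum0' xijk(2,3)]
  have "Mp (A i j) = 0" by blast
  then have "M (coeff (A i j) k) = 0" using Mp_coeff[of "A i j" k] by simp
  then show ?thesis using xijk unfolding coeff_A M_def by auto
qed

section \<open>Localization at \<open>p\<close> and rational polynomials\<close>

lemma monic_irreducible_imp_irreducible\<^sub>d_rat:
  fixes f :: "int poly"
  assumes "monic f" and "irreducible f"
  shows "irreducible\<^sub>d (of_int_poly f :: rat poly)"
proof -
  have "content f dvd 1" using content_dvd_coeff[of f "degree f"] assms(1) by simp
  then have "primitive f" by (simp add: is_unit_content_iff)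
  with assms(2) have "irreducible\<^sub>d f" using irreducible_primitive_connect by blast
  then show ?thesis by (rule irreducible\<^sub>d_int_rat)
qed

lemma rat_common_denominator:
  fixes c :: "'a \<Rightarrow> rat"
  assumes "finite I"
  shows "\<exists>d a. d > 0 \<and> (\<forall>x\<in>I. c x = of_int (a x) / of_int d)"
  using assms
proof (induction I rule: finite_induct)
  case empty show ?case by (intro exI[of _ 1]) auto
next
  case (insert y F)
  then obtain d a where d: "d > 0" and a: "\<forall>x\<in>F. c x = of_int (a x) / of_int d" by auto
  obtain n e where ne: "quotient_of (c y) = (n, e)" by (rule prod.exhaust)
  have e: "e > 0" using quotient_of_denom_pos[OF ne] .
  have "c y = of_int n / of_int e" using quotient_of_div[OF ne] .
  with a d e have "\<forall>x\<in>insert y F. c x = of_int (if x = y then n * d else a x * e) / of_int (d * e)"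
    by auto
  with d e show ?case by (intro exI[of _ "d * e"] exI[of _ "\<lambda>x. if x = y then n * d else a x * e"]) simp
qed

lemma of_int_in_zloc: "prime p \<Longrightarrow> of_int a \<in> zloc p"
  unfolding zloc_def by (intro CollectI exI[of _ a] exI[of _ 1]) (auto simp: not_prime_unit)

lemma map_poly_of_rat_of_int_poly:
  "map_poly (of_rat :: rat \<Rightarrow> 'a :: field_char_0) (of_int_poly q) = of_int_poly q"
  by (subst map_poly_map_poly) (auto simp: o_def)

lemma poly_of_int_poly_in_zloc_adj:
  assumes "prime p"
  shows "poly (of_int_poly q) \<theta> \<in> zloc_adj p \<theta>"
  using assms unfolding zloc_adj_def
  by (intro CollectI exI[of _ "of_int_poly q"]) (auto simp: of_int_in_zloc map_poly_of_rat_of_int_poly)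

lemma zloc_poly_integral_multiple:
  fixes q :: "rat poly"
  assumes p: "prime p" and q: "\<forall>i. coeff q i \<in> zloc p"
  shows "\<exists>d Z. d \<noteq> 0 \<and> \<not> p dvd d \<and> of_int_poly Z = smult (of_int d) q"
  using q
proof (induction q)
  case 0
  have "\<not> p dvd 1" using p by (meson not_prime_unit)
  then show ?case by (intro exI[of _ 1] exI[of _ 0]) auto
next
  case (pCons a q)
  have "\<forall>i. coeff q i \<in> zloc p" using pCons.prems by (metis coeff_pCons_Suc)
  with pCons.IH obtain d Z where d: "d \<noteq> 0" "\<not> p dvd d" and Z: "of_int_poly Z = smult (of_int d) q"
    by auto
  have "a \<in> zloc p" using pCons.prems by (metis coeff_pCons_0)
  then obtain s t where t: "t \<noteq> 0" "\<not> p dvd t" and a: "a = of_int s / of_int t"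
    unfolding zloc_def by auto
  have "of_int_poly (pCons (s * d) (smult t Z))
      = pCons (of_int (s * d)) (smult (of_int t) (of_int_poly Z) :: rat poly)"
    by (cases "s * d = 0 \<and> smult t Z = 0") (auto simp: map_poly_pCons of_int_hom.map_poly_hom_smult)
  also have "\<dots> = smult (of_int (d * t)) (pCons a q)"
    using t by (simp add: Z a smult_smult ac_simps)
  finally show ?case using d t p
    by (intro exI[of _ "d * t"] exI[of _ "pCons (s * d) (smult t Z)"]) (auto simp: prime_dvd_mult_iff)
qed

lemma irreducible\<^sub>d_root_imp_eq_0:
  fixes F R :: "rat poly" and \<theta> :: "'a :: field_char_0"
  assumes irr: "irreducible\<^sub>d F" and root: "poly (map_poly of_rat F) \<theta> = 0"
    and deg: "degree R < degree F" and R0: "poly (map_poly of_rat R) \<theta> = 0"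
  shows "R = 0"
proof (rule ccontr)
  assume nz: "R \<noteq> 0"
  interpret h: map_poly_comm_ring_hom "of_rat :: rat \<Rightarrow> 'a" ..
  define G where "G = gcd R F"
  have G0: "G \<noteq> 0" unfolding G_def using nz by simp
  obtain H where FGH: "F = G * H" using gcd_dvd2[of R F] unfolding G_def by (elim dvdE)
  have H0: "H \<noteq> 0" using FGH irreducible\<^sub>dD(1)[OF irr] by auto
  obtain u v where "u * R + v * F = G"
    using bezout_coefficients_fst_snd[of R F] unfolding G_def by blast
  then have G_root: "poly (map_poly of_rat G) \<theta> = 0"
    by (metis R0 root h.hom_add h.hom_mult poly_add poly_mult mult_zero_right add_0)
  have "degree G \<noteq> 0"
  proof
    assume "degree G = 0"
    then obtain a where G: "G = [:a:]" by (rule degree_eq_zeroE)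
    have "map_poly (of_rat :: rat \<Rightarrow> 'a) [:a:] = [:of_rat a:]"
      by (rule poly_eqI) (simp add: coeff_map_poly coeff_pCons split: nat.split)
    with G_root G0 show False unfolding G by simp
  qed
  moreover have "degree G \<le> degree R" unfolding G_def using nz by (intro dvd_imp_degree_le) simp_all
  moreover have "degree F = degree G + degree H" unfolding FGH by (rule degree_mult_eq[OF G0 H0])
  ultimately have "degree G < degree F" and "degree H < degree F" using deg by linarith+
  with irreducible\<^sub>dD(2)[OF irr] FGH show False by blast
qed

lemma inj_on_if_independent:
  fixes W :: "'a \<Rightarrow> 'k :: field poly"
  assumes fin: "finite I"
    and indep: "\<forall>c. (\<Sum>x\<in>I. smult (c x) (W x)) = 0 \<longrightarrow> (\<forall>x\<in>I. c x = 0)"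
  shows "inj_on W I"
proof (rule inj_onI, rule ccontr)
  fix x y assume x: "x \<in> I" and y: "y \<in> I" and eq: "W x = W y" and ne: "x \<noteq> y"
  define c where "c z = (if z = x then 1 else if z = y then -1 else (0::'k))" for z
  have "(\<Sum>z\<in>I. smult (c z) (W z)) = (\<Sum>z\<in>{x,y}. smult (c z) (W z))"
    using fin x y by (intro sum.mono_neutral_right) (auto simp: c_def)
  also have "\<dots> = 0" using ne eq by (simp add: c_def)
  finally have "c x = 0" using indep x by blast
  then show False by (simp add: c_def)
qed

lemma independent_polys_span_degree_lt:
  fixes W :: "'a \<Rightarrow> 'k :: field poly"
  assumes fin: "finite I" and card: "card I = n" and deg: "\<forall>x\<in>I. degree (W x) < n"
    and indep: "\<forall>c. (\<Sum>x\<in>I. smult (c x) (W x)) = 0 \<longrightarrow> (\<forall>x\<in>I. c x = 0)"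
    and R: "degree R < n"
  shows "\<exists>c. R = (\<Sum>x\<in>I. smult (c x) (W x))"
proof -
  interpret V: vector_space "smult :: 'k \<Rightarrow> 'k poly \<Rightarrow> 'k poly"
    by unfold_locales (simp_all add: smult_add_right smult_add_left)
  have inj: "inj_on W I" using fin indep by (rule inj_on_if_independent)
  let ?B = "W ` I"
  have indB: "V.independent ?B"
    unfolding V.independent_explicit_module
  proof (intro allI impI)
    fix t u v assume t: "finite t" "t \<subseteq> ?B" and s: "(\<Sum>v\<in>t. smult (u v) v) = 0" and v: "v \<in> t"
    define c where "c x = (if W x \<in> t then u (W x) else 0)" for x
    have "(\<Sum>x\<in>I. smult (c x) (W x)) = (\<Sum>w\<in>?B. smult (if w \<in> t then u w else 0) w)"
      unfolding c_def by (subst sum.reindex[OF inj]) simp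
    also have "\<dots> = (\<Sum>w\<in>t. smult (u w) w)"
      using t fin by (intro sum.mono_neutral_cong_right) auto
    finally have "\<forall>x\<in>I. c x = 0" using indep s by simp
    moreover obtain x where "x \<in> I" "v = W x" using v t by auto
    ultimately show "u v = 0" using v unfolding c_def by auto
  qed
  define X where "X = (\<lambda>k. monom (1::'k) k) ` {..<n}"
  have finX: "finite X" and cardX: "card X \<le> n" unfolding X_def
    using card_image_le[of "{..<n}" "\<lambda>k. monom (1::'k) k"] by auto
  have inX: "P \<in> V.span X" if "degree P < n" for P
  proof -
    have "P = (\<Sum>k\<le>n - 1. monom (coeff P k) k)"
      using that by (intro poly_as_sum_of_monoms'[symmetric]) auto
    also have "\<dots> = (\<Sum>k\<le>n - 1. smult (coeff P k) (monom 1 k))" by (simp add: smult_monom)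
    also have "\<dots> \<in> V.span X"
      using that by (intro V.span_sum V.span_scale V.span_base) (auto simp: X_def)
    finally show ?thesis .
  qed
  have "R \<in> V.span ?B"
  proof (rule ccontr)
    assume nR: "R \<notin> V.span ?B"
    then have "R \<notin> ?B" using V.span_base by blast
    then have "card (insert R ?B) = n + 1" using fin card_image[OF inj] card by simp
    moreover have "V.independent (insert R ?B)" by (rule V.independent_insertI[OF nR indB])
    moreover have "insert R ?B \<subseteq> V.span X" using inX R deg by auto
    ultimately show False using V.independent_span_bound[OF finX] cardX by fastforce
  qed
  then obtain u where "R = (\<Sum>v\<in>?B. smult (u v) v)"
    unfolding V.span_finite[OF finite_imageI[OF fin]] by auto
  also have "\<dots> = (\<Sum>x\<in>I. smult (u (W x)) (W x))" by (subst sum.reindex[OF inj]) simp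
  finally show ?thesis by (rule exI[of _ "\<lambda>x. u (W x)"])
qed

section \<open>Families of polynomials independent modulo \<open>p\<close>\<close>

locale mod_p_independent =
  fixes p :: int and I :: "'a set" and W :: "'a \<Rightarrow> int poly"
  assumes prime: "prime p" and finite_I: "finite I"
    and mod_p_independent: "\<And>a. poly_mod.Mp p (\<Sum>x\<in>I. smult (a x) (W x)) = 0 \<Longrightarrow> \<forall>x\<in>I. p dvd a x"
begin

lemma combination_Mp_0_divide:
  assumes "poly_mod.Mp p (\<Sum>x\<in>I. smult (a x) (W x)) = 0"
  shows "\<exists>b. (\<Sum>x\<in>I. smult (a x) (W x)) = smult p (\<Sum>x\<in>I. smult (b x) (W x))
    \<and> (\<forall>x\<in>I. a x = p * b x)"
proof -
  have ab: "\<forall>x\<in>I. a x = p * (a x div p)" using mod_p_independent[OF assms] by auto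
  then have "(\<Sum>x\<in>I. smult (a x) (W x)) = smult p (\<Sum>x\<in>I. smult (a x div p) (W x))"
    unfolding smult_sum2 by (intro sum.cong refl) (simp add: smult_smult)
  with ab show ?thesis by (intro exI[of _ "\<lambda>x. a x div p"] conjI)
qed

lemma int_combination_eq_0:
  assumes sum0: "(\<Sum>x\<in>I. smult (a x) (W x)) = 0" and x: "x \<in> I"
  shows "a x = 0"
proof (rule ccontr)
  have p2: "p \<ge> 2" using prime by (simp add: prime_ge_2_int)
  have "p ^ k dvd a x" for k
    using sum0
  proof (induction k arbitrary: a)
    case (Suc k)
    then have "poly_mod.Mp p (\<Sum>x\<in>I. smult (a x) (W x)) = 0" by (simp add: poly_mod.Mp_0)
    from combination_Mp_0_divide[OF this] obtain b
      where ab: "(\<Sum>x\<in>I. smult (a x) (W x)) = smult p (\<Sum>x\<in>I. smult (b x) (W x))"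
        and "\<forall>x\<in>I. a x = p * b x"
      by blast
    with x have "a x = p * b x" by blast
    moreover from Suc.prems ab p2 have "(\<Sum>x\<in>I. smult (b x) (W x)) = 0" by simp
    ultimately show ?case using Suc.IH by simp
  qed simp
  moreover assume "a x \<noteq> 0"
  ultimately have "\<bar>p ^ nat \<bar>a x\<bar>\<bar> \<le> \<bar>a x\<bar>" by (intro dvd_imp_le_int)
  moreover have "int (nat \<bar>a x\<bar>) < 2 ^ nat \<bar>a x\<bar>" by (rule of_nat_less_two_power)
  moreover have "(2::int) ^ nat \<bar>a x\<bar> \<le> p ^ nat \<bar>a x\<bar>" using p2 by (intro power_mono) auto
  ultimately show False by linarith
qed

lemma rat_combination_eq_0:
  assumes sum0: "(\<Sum>x\<in>I. smult (c x) (of_int_poly (W x) :: rat poly)) = 0" and x: "x \<in> I"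
  shows "c x = 0"
proof -
  obtain d a where d: "d > 0" and a: "\<forall>x\<in>I. c x = of_int (a x) / of_int d"
    using rat_common_denominator[OF finite_I] by blast
  have "of_int_poly (\<Sum>x\<in>I. smult (a x) (W x))
      = smult (of_int d) (\<Sum>x\<in>I. smult (c x) (of_int_poly (W x) :: rat poly))"
    unfolding of_int_poly_hom.hom_sum of_int_hom.map_poly_hom_smult smult_sum2
    using a d by (intro sum.cong refl) (simp add: smult_smult)
  with sum0 have "(\<Sum>x\<in>I. smult (a x) (W x)) = 0" by simp
  with a x show ?thesis using int_combination_eq_0 by simp
qed

text \<open>Denominators divisible by \<open>p\<close> can be cancelled, since a relation that vanishes
  modulo \<open>p\<close> has all coefficients divisible by \<open>p\<close>.\<close>

lemma combination_unit_denominator: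
  assumes "e > 0" and "smult e r = (\<Sum>x\<in>I. smult (a x) (W x))"
  shows "\<exists>e' b. e' > 0 \<and> \<not> p dvd e' \<and> smult e' r = (\<Sum>x\<in>I. smult (b x) (W x))"
  using assms
proof (induction "nat e" arbitrary: e a rule: less_induct)
  case less
  show ?case
  proof (cases "p dvd e")
    case True
    then obtain e1 where e: "e = p * e1" by (elim dvdE)
    have p1: "p > 1" using prime by (simp add: prime_gt_1_int)
    with less.prems(1) e have e1: "e1 > 0" "nat e1 < nat e" by (auto simp: zero_less_mult_iff)
    have "(\<Sum>x\<in>I. smult (a x) (W x)) = smult p (smult e1 r)"
      using less.prems(2) e by (simp add: smult_smult)
    then have "poly_mod.Mp p (\<Sum>x\<in>I. smult (a x) (W x)) = 0" by (simp only: poly_mod.Mp_smult_m_0)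
    from combination_Mp_0_divide[OF this] obtain b
      where "(\<Sum>x\<in>I. smult (a x) (W x)) = smult p (\<Sum>x\<in>I. smult (b x) (W x))"
      by blast
    with less.prems(2) e have "smult p (smult e1 r) = smult p (\<Sum>x\<in>I. smult (b x) (W x))"
      by (simp add: smult_smult)
    with p1 have "smult e1 r = (\<Sum>x\<in>I. smult (b x) (W x))" by (simp del: smult_smult)
    with e1 show ?thesis using less.hyps by blast
  qed (use less.prems in blast)
qed

end

section \<open>Bases of \<open>\<int>\<^sub>(\<^sub>p\<^sub>)[\<theta>]\<close>\<close>

locale zloc_basis = mod_p_independent p I W
  for p :: int and I :: "'a set" and W :: "'a \<Rightarrow> int poly" +
  fixes f :: "int poly" and \<theta> :: complex
  assumes monic_f: "monic f"
    and irreducible_f: "irreducible\<^sub>d (of_int_poly f :: rat poly)"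
    and root: "poly (of_int_poly f) \<theta> = 0"
    and card_I: "card I = degree f"
    and degree_W: "\<And>x. x \<in> I \<Longrightarrow> degree (W x) < degree f"
begin

lemma poly_combination:
  "(\<Sum>x\<in>I. of_rat (c x) * poly (of_int_poly (W x)) \<theta>)
    = poly (map_poly of_rat (\<Sum>x\<in>I. smult (c x) (of_int_poly (W x)))) \<theta>"
proof -
  interpret h: map_poly_comm_ring_hom "of_rat :: rat \<Rightarrow> complex" ..
  show ?thesis
    unfolding h.hom_sum of_rat_hom.map_poly_hom_smult map_poly_of_rat_of_int_poly poly_sum poly_smult ..
qed

lemma combination_eq_0:
  assumes "(\<Sum>x\<in>I. of_rat (c x) * poly (of_int_poly (W x)) \<theta>) = 0" and "x \<in> I"
  shows "c x = 0"
proof -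
  have "degree (\<Sum>x\<in>I. smult (c x) (of_int_poly (W x) :: rat poly)) \<le> degree f - 1"
  proof (rule degree_sum_le[OF finite_I])
    fix x assume "x \<in> I"
    then have "degree (of_int_poly (W x) :: rat poly) \<le> degree f - 1" using degree_W by fastforce
    then show "degree (smult (c x) (of_int_poly (W x) :: rat poly)) \<le> degree f - 1"
      by (rule order.trans[OF degree_smult_le])
  qed
  moreover have "degree f > 0" using irreducible\<^sub>dD(1)[OF irreducible_f] by simp
  ultimately have "(\<Sum>x\<in>I. smult (c x) (of_int_poly (W x) :: rat poly)) = 0"
    using assms(1) root unfolding poly_combination
    by (intro irreducible\<^sub>d_root_imp_eq_0[OF irreducible_f]) (simp_all add: map_poly_of_rat_of_int_poly)
  then show ?thesis using assms(2) by (rule rat_combination_eq_0)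
qed

lemma zloc_adj_integral_multiple:
  assumes "z \<in> zloc_adj p \<theta>"
  shows "\<exists>d r. d \<noteq> 0 \<and> \<not> p dvd d \<and> degree r < degree f \<and> of_int d * z = poly (of_int_poly r) \<theta>"
proof -
  obtain q where zq: "z = poly (map_poly of_rat q) \<theta>" and q: "\<forall>i. coeff q i \<in> zloc p"
    using assms unfolding zloc_adj_def by auto
  obtain d Z where d: "d \<noteq> 0" "\<not> p dvd d" and Z: "of_int_poly Z = smult (of_int d) q"
    using zloc_poly_integral_multiple[OF prime q] by blast
  obtain s r where "pdivmod_monic Z f = (s, r)" by (rule prod.exhaust)
  from pdivmod_monic[OF monic_f this] have Zsr: "Z = f * s + r" and "r = 0 \<or> degree r < degree f"
    by auto
  then have deg_r: "degree r < degree f" using irreducible\<^sub>dD(1)[OF irreducible_f] by auto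
  have "of_int d * z = poly (map_poly of_rat (smult (of_int d) q)) \<theta>"
    unfolding zq by (simp add: of_rat_hom.map_poly_hom_smult)
  also have "\<dots> = poly (of_int_poly Z) \<theta>" unfolding Z[symmetric] map_poly_of_rat_of_int_poly ..
  also have "\<dots> = poly (of_int_poly r) \<theta>"
    unfolding Zsr of_int_poly_hom.hom_add of_int_poly_hom.hom_mult using root by simp
  finally show ?thesis using d deg_r by (intro exI[of _ d] exI[of _ r]) simp
qed

lemma int_poly_unit_combination:
  assumes "degree r < degree f"
  shows "\<exists>e b. e > 0 \<and> \<not> p dvd e \<and> smult e r = (\<Sum>x\<in>I. smult (b x) (W x))"
proof -
  have deg_r: "degree (of_int_poly r :: rat poly) < degree f" using assms by simp
  have deg_W: "\<forall>x\<in>I. degree (of_int_poly (W x) :: rat poly) < degree f" using degree_W by simp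
  have "\<forall>c. (\<Sum>x\<in>I. smult (c x) (of_int_poly (W x) :: rat poly)) = 0 \<longrightarrow> (\<forall>x\<in>I. c x = 0)"
    using rat_combination_eq_0 by blast
  from independent_polys_span_degree_lt[OF finite_I card_I deg_W this deg_r]
  obtain c where c: "of_int_poly r = (\<Sum>x\<in>I. smult (c x) (of_int_poly (W x) :: rat poly))"
    by blast
  obtain e a where e: "e > 0" and a: "\<forall>x\<in>I. c x = of_int (a x) / of_int e"
    using rat_common_denominator[OF finite_I] by blast
  have "of_int_poly (smult e r) = (of_int_poly (\<Sum>x\<in>I. smult (a x) (W x)) :: rat poly)"
    unfolding of_int_hom.map_poly_hom_smult c of_int_poly_hom.hom_sum smult_sum2
    using a e by (intro sum.cong refl) (auto simp: smult_smult)
  then have "smult e r = (\<Sum>x\<in>I. smult (a x) (W x))" by simp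
  with e show ?thesis by (rule combination_unit_denominator)
qed

lemma zloc_adj_spanned:
  assumes "z \<in> zloc_adj p \<theta>"
  shows "\<exists>c. (\<forall>x\<in>I. c x \<in> zloc p) \<and> z = (\<Sum>x\<in>I. of_rat (c x) * poly (of_int_poly (W x)) \<theta>)"
proof -
  obtain d r where d: "d \<noteq> 0" "\<not> p dvd d" and r: "degree r < degree f"
    and dz: "of_int d * z = poly (of_int_poly r) \<theta>"
    using zloc_adj_integral_multiple[OF assms] by blast
  obtain e b where e: "e > 0" "\<not> p dvd e" and eb: "smult e r = (\<Sum>x\<in>I. smult (b x) (W x))"
    using int_poly_unit_combination[OF r] by blast
  define c where "c x = (of_int (b x) / of_int (e * d) :: rat)" for x
  from dz have "of_int (e * d) * z = poly (of_int_poly (smult e r)) \<theta>"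
    by (simp add: of_int_hom.map_poly_hom_smult)
  also have "\<dots> = (\<Sum>x\<in>I. of_int (b x) * poly (of_int_poly (W x)) \<theta>)"
    unfolding eb of_int_poly_hom.hom_sum of_int_hom.map_poly_hom_smult poly_sum poly_smult ..
  finally have "z = (\<Sum>x\<in>I. of_int (b x) * poly (of_int_poly (W x)) \<theta>) / of_int (e * d)"
    using e(1) d(1) by (simp add: field_simps)
  also have "\<dots> = (\<Sum>x\<in>I. of_rat (c x) * poly (of_int_poly (W x)) \<theta>)"
    unfolding c_def sum_divide_distrib by (intro sum.cong refl) (simp add: of_rat_divide of_rat_mult)
  finally have "z = (\<Sum>x\<in>I. of_rat (c x) * poly (of_int_poly (W x)) \<theta>)" .
  moreover have "c x \<in> zloc p" for x
    unfolding zloc_def c_def using e d prime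
    by (intro CollectI exI[of _ "b x"] exI[of _ "e * d"]) (auto simp: prime_dvd_mult_iff)
  ultimately show ?thesis by (intro exI[of _ c]) blast
qed

end

lemma (in poly_mod_prime) zloc_basis_quot_monom:
  fixes g :: "nat \<Rightarrow> int poly"
  assumes f_monic: "monic f" and f_irr: "irreducible f" and f_deg: "degree f > 0"
    and root: "poly (of_int_poly f) \<theta> = 0"
    and monic_g: "\<And>i. i < m \<Longrightarrow> monic (g i)"
    and coprime: "\<And>i i'. i < m \<Longrightarrow> i' < m \<Longrightarrow> i \<noteq> i' \<Longrightarrow> coprime_m (g i) (g i')"
    and fact: "Mp f = Mp (\<Prod>i<m. g i ^ l i)"
    and I: "I = {(i, j, k). i < m \<and> 1 \<le> j \<and> j \<le> l i \<and> k < degree (g i)}"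
  shows "zloc_basis p I (quot_monom f g) f \<theta>"
proof -
  have degree_f: "degree f = (\<Sum>i<m. l i * degree (g i))"
    using f_monic monic_g fact by (rule degree_eq_if_Mp_eq_monic_prod)
  have card_I: "card I = degree f" unfolding I degree_f by (rule card_triple_index_set)
  show ?thesis
  proof
    show "finite I" using card_I f_deg by (intro card_ge_0_finite) simp
    show "\<And>a. Mp (\<Sum>x\<in>I. smult (a x) (quot_monom f g x)) = 0 \<Longrightarrow> \<forall>x\<in>I. p dvd a x"
      using quot_monom_combination_Mp_0_imp_dvd[OF monic_g coprime fact I] by blast
    show "irreducible\<^sub>d (of_int_poly f :: rat poly)"
      using f_monic f_irr by (rule monic_irreducible_imp_irreducible\<^sub>d_rat)
    show "\<And>x. x \<in> I \<Longrightarrow> degree (quot_monom f g x) < degree f"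
      using degree_quot_monom[OF f_monic monic_g degree_f] unfolding I by blast
  qed (use prime f_monic root card_I in auto)
qed

theorem lemma4p4:
  fixes f :: "int poly" and \<theta> :: complex and N p :: int
    and m :: nat and g :: "nat \<Rightarrow> int poly" and l :: "nat \<Rightarrow> nat"
  assumes f_monic: "lead_coeff f = 1"
    and f_irr: "irreducible f"
    and f_deg: "degree f > 1"
    and root: "poly (map_poly of_int f) \<theta> = 0"
    and N_gt: "N > 1"
    and N_primes: "\<forall>q::int. prime q \<and> q dvd N \<longrightarrow> q > int (degree f)"
    and g_monic: "\<forall>i<m. lead_coeff (g i) = 1 \<and> degree (g i) > 0"
    and l_pos: "\<forall>i<m. l i > 0"
    and fact: "poly_mod.Mp N f = poly_mod.Mp N (\<Prod>i<m. g i ^ l i)"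
    and sqfree: "\<forall>q::int. prime q \<and> q dvd N \<longrightarrow>
        (\<forall>i<m. poly_mod.square_free_m q (g i)) \<and>
        (\<forall>i<m. \<forall>i'<m. i \<noteq> i' \<longrightarrow> poly_mod.coprime_m q (g i) (g i'))"
    and p_prime: "prime p" and p_dvd: "p dvd N"
  defines "I \<equiv> {(i, j, k). i < m \<and> 1 \<le> j \<and> j \<le> l i \<and> k < degree (g i)}"
    and "\<alpha> \<equiv> (\<lambda>(i, j, k). poly (map_poly of_int (int_quot f (g i ^ j))) \<theta> * \<theta> ^ k)"
  shows "(\<forall>x\<in>I. \<alpha> x \<in> zloc_adj p \<theta>)
    \<and> (\<forall>z\<in>zloc_adj p \<theta>. \<exists>c. (\<forall>x\<in>I. c x \<in> zloc p) \<and> z = (\<Sum>x\<in>I. of_rat (c x) * \<alpha> x))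
    \<and> (\<forall>c. (\<forall>x\<in>I. c x \<in> zloc p) \<and> (\<Sum>x\<in>I. of_rat (c x) * \<alpha> x) = 0 \<longrightarrow> (\<forall>x\<in>I. c x = 0))
    \<and> (\<forall>c :: nat \<times> nat \<times> nat \<Rightarrow> int.
         poly_mod.Mp p (\<Sum>x\<in>I. case x of (i, j, k) \<Rightarrow>
            smult (c x) (int_quot f (g i ^ j) * monom 1 k)) = 0
         \<longrightarrow> (\<forall>x\<in>I. p dvd c x))"
proof -
  interpret p: poly_mod_prime p using p_prime by unfold_locales
  have monic_g: "\<And>i. i < m \<Longrightarrow> monic (g i)" using g_monic by auto
  have coprime: "\<And>i i'. i < m \<Longrightarrow> i' < m \<Longrightarrow> i \<noteq> i' \<Longrightarrow> p.coprime_m (g i) (g i')"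
    using sqfree p_prime p_dvd by blast
  have fact_p: "p.Mp f = p.Mp (\<Prod>i<m. g i ^ l i)"
    using p_dvd N_gt fact by (intro p.Mp_eq_if_Mp_multiple_modulus_eq) auto
  interpret zloc_basis p I "quot_monom f g" f \<theta>
    using f_deg by (intro p.zloc_basis_quot_monom[OF f_monic f_irr _ root monic_g coprime fact_p
        I_def[THEN meta_eq_to_obj_eq]]) simp
  have \<alpha>: "\<alpha> = (\<lambda>x. poly (of_int_poly (quot_monom f g x)) \<theta>)"
    unfolding \<alpha>_def quot_monom_def
    by (intro ext) (auto simp: of_int_poly_hom.hom_mult poly_monom split: prod.splits)
  have sum: "(\<Sum>x\<in>I. case x of (i, j, k) \<Rightarrow> smult (c x) (int_quot f (g i ^ j) * monom 1 k))
      = (\<Sum>x\<in>I. smult (c x) (quot_monom f g x))" for c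
    unfolding quot_monom_def by (intro sum.cong refl) (auto split: prod.splits)
  show ?thesis
    unfolding \<alpha> sum
    using poly_of_int_poly_in_zloc_adj[OF p_prime] zloc_adj_spanned combination_eq_0 mod_p_independent
    by blast
qed

end
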